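(* Let $\kappa>0$ and define, for $\alpha>0$, $$g_\kappa(\alpha)=1-\exp\!\Big(-\big(\kappa\,\Gamma(\tfrac{1}{\alpha}+1)\big)^{\alpha}\Big).$$ (i) If $\kappa\le 1$, then $$\inf_{\alpha\in(0,\infty)} g_\kappa(\alpha)=\lim_{\alpha\to+\infty} g_\kappa(\alpha)=\begin{cases}0,&\kappa<1,\\ 1-e^{-e^{-\gamma}},&\kappa=1,\end{cases}$$ where $\gamma=\sum_{n=1}^\infty\big[\frac1n-\ln(1+\frac1n)\big]$ is Euler's constant. (ii) If $\kappa>1$, then the function $\varphi_\kappa(x):=(x-1)\psi(x)-\ln(\kappa\Gamma(x))$ has a unique zero $x_0(\kappa)$ on $(1,\infty)$, and $$\min_{\alpha\in(0,\infty)} g_\kappa(\alpha)=g_\kappa(\alpha_0(\kappa)),\qquad \alpha_0(\kappa)=\frac{1}{x_0(\kappa)-1}.$$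
   Context: $\Gamma$ denotes the Gamma function and $\psi=\Gamma'/\Gamma$ the digamma function. Interpretation: if $X$ is a Weibull random variable with parameters $\alpha>0,\theta>0$, i.e. with density $f(x)=\frac{\alpha}{\theta}x^{\alpha-1}e^{-x^\alpha/\theta}$ for $x>0$, then $EX=\theta^{1/\alpha}\Gamma(\frac1\alpha+1)$ and $P(X\le\kappa EX)=g_\kappa(\alpha)$ (independent of $\theta$). *)

theory Defs
  imports "HOL-Analysis.Analysis"
begin

definition weib_g :: "real \<Rightarrow> real \<Rightarrow> real" where
  "weib_g \<kappa> \<alpha> = 1 - exp (- ((\<kappa> * Gamma (1 / \<alpha> + 1)) powr \<alpha>))"

definition weib_phi :: "real \<Rightarrow> real \<Rightarrow> real" where
  "weib_phi \<kappa> x = (x - 1) * Digamma x - ln (\<kappa> * Gamma x)"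

end

theory Submission
  imports Defs
begin

text \<open>
  Write \<open>g\<^sub>\<kappa>(\<alpha>) = 1 - exp (- exp F(\<alpha>))\<close> with \<open>F(\<alpha>) = \<alpha> ln (\<kappa> \<Gamma>(1/\<alpha> + 1))\<close>
  (\<open>weib_exponent\<close>). Then \<open>F'(\<alpha>) = - \<phi>\<^sub>\<kappa>(1/\<alpha> + 1)\<close>, and \<open>\<phi>\<^sub>\<kappa> = D - ln \<kappa>\<close> with
  \<open>D(x) = (x - 1) \<psi>(x) - ln \<Gamma>(x)\<close> (\<open>ln_Gamma_defect\<close>). \<open>D\<close> vanishes at 1, has derivative
  \<open>(x - 1) \<psi>'(x) > 0\<close> on \<open>(1,\<infinity>)\<close>, and is unbounded there since \<open>D \<ge> \<psi>\<close> from 2 on.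
  If \<open>\<kappa> \<le> 1\<close>, then \<open>\<phi>\<^sub>\<kappa> > 0\<close> on \<open>(1,\<infinity>)\<close>, so \<open>g\<^sub>\<kappa>\<close> decreases and its infimum is its
  limit, which comes from \<open>\<alpha> ln \<Gamma>(1/\<alpha> + 1) \<rightarrow> \<psi>(1) = -\<gamma>\<close>.
  If \<open>\<kappa> > 1\<close>, then \<open>\<phi>\<^sub>\<kappa>\<close> increases from \<open>- ln \<kappa> < 0\<close> to \<open>\<infinity>\<close>, so it has a single
  zero \<open>x\<^sub>0\<close>, and \<open>F'\<close> changes sign from \<open>-\<close> to \<open>+\<close> at \<open>1 / (x\<^sub>0 - 1)\<close>.
\<close>

lemma antimono_on_tendsto_at_top_imp_INF:
  fixes f :: "real \<Rightarrow> real"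
  assumes mono: "antimono_on {a<..} f" and lim: "(f \<longlongrightarrow> L) at_top"
  shows "(INF x\<in>{a<..}. f x) = L"
proof -
  have lower: "L \<le> f x" if "a < x" for x
  proof (rule tendsto_le[OF trivial_limit_at_top_linorder tendsto_const lim])
    show "\<forall>\<^sub>F y in at_top. f y \<le> f x"
      using eventually_ge_at_top[of x] by eventually_elim (use that mono in \<open>auto simp: monotone_on_def\<close>)
  qed
  have bdd: "bdd_below (f ` {a<..})"
    by (rule bdd_belowI2[of _ L]) (auto intro: lower)
  have "\<forall>\<^sub>F y in at_top. (INF x\<in>{a<..}. f x) \<le> f y"
    using eventually_gt_at_top[of a] by eventually_elim (use bdd in \<open>auto intro: cINF_lower\<close>)
  then have "(INF x\<in>{a<..}. f x) \<le> L"
    by (rule tendsto_le[OF trivial_limit_at_top_linorder lim tendsto_const])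
  moreover have "L \<le> (INF x\<in>{a<..}. f x)"
    by (rule cINF_greatest) (auto intro: lower)
  ultimately show ?thesis by (rule antisym)
qed

lemma DERIV_sign_change_imp_minimum:
  fixes f f' :: "real \<Rightarrow> real"
  assumes deriv: "\<And>x. a < x \<Longrightarrow> (f has_real_derivative f' x) (at x)"
    and nonpos: "\<And>x. a < x \<Longrightarrow> x \<le> c \<Longrightarrow> f' x \<le> 0"
    and nonneg: "\<And>x. c \<le> x \<Longrightarrow> f' x \<ge> 0"
    and "a < c" "a < x"
  shows "f c \<le> f x"
proof -
  have cont: "continuous_on {u..v} f" if "a < u" for u v
    using that by (intro continuous_at_imp_continuous_on ballI DERIV_isCont[OF deriv]) auto
  show ?thesis
  proof (cases "x \<le> c")
    case True
    show ?thesis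
    proof (rule DERIV_nonpos_imp_decreasing_open[OF True _ cont[OF \<open>a < x\<close>]])
      fix t assume "x < t" "t < c"
      then show "\<exists>D. (f has_real_derivative D) (at t) \<and> D \<le> 0"
        using \<open>a < x\<close> by (intro exI[of _ "f' t"] conjI deriv nonpos) auto
    qed
  next
    case False
    show ?thesis
    proof (rule DERIV_nonneg_imp_increasing_open[OF _ _ cont[OF \<open>a < c\<close>]])
      fix t assume "c < t"
      then show "\<exists>D. (f has_real_derivative D) (at t) \<and> D \<ge> 0"
        using \<open>a < c\<close> by (intro exI[of _ "f' t"] conjI deriv nonneg) auto
    qed (use False in auto)
  qed
qed

text \<open>\<open>ln \<Gamma>(1) = 0\<close> minus the value at 1 of the tangent to \<open>ln \<Gamma>\<close> at \<open>x\<close>.\<close>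

definition ln_Gamma_defect :: "real \<Rightarrow> real" where
  "ln_Gamma_defect x = (x - 1) * Digamma x - ln_Gamma x"

lemma has_real_derivative_ln_Gamma_defect:
  assumes "x > 0"
  shows "(ln_Gamma_defect has_real_derivative (x - 1) * Polygamma 1 x) (at x)"
  unfolding ln_Gamma_defect_def [abs_def]
  using assms by (auto intro!: derivative_eq_intros simp: algebra_simps)

lemma ln_Gamma_defect_1 [simp]: "ln_Gamma_defect 1 = 0"
  by (simp add: ln_Gamma_defect_def ln_Gamma_real_pos)

lemma ln_Gamma_defect_strict_mono_on: "strict_mono_on {1..} ln_Gamma_defect"
proof (rule strict_mono_onI)
  fix x y :: real
  assume "x \<in> {1..}" "x < y"
  then have x: "x \<ge> 1" and "x < y" by auto
  have deriv: "(ln_Gamma_defect has_real_derivative (t - 1) * Polygamma 1 t) (at t)" if "t \<ge> x" for t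
    using x that by (intro has_real_derivative_ln_Gamma_defect) auto
  have pos: "(t - 1) * Polygamma 1 t > 0" if "t > x" for t
    using x that by (intro mult_pos_pos Polygamma_real_odd_pos) auto
  have "continuous_on {x..y} ln_Gamma_defect"
    using x by (intro continuous_at_imp_continuous_on ballI DERIV_isCont[OF deriv]) auto
  then show "ln_Gamma_defect x < ln_Gamma_defect y"
  proof (rule DERIV_pos_imp_increasing_open[OF \<open>x < y\<close>, rotated])
    fix t assume "x < t"
    then show "\<exists>D. (ln_Gamma_defect has_real_derivative D) (at t) \<and> D > 0"
      by (intro exI[of _ "(t - 1) * Polygamma 1 t"] conjI deriv pos) auto
  qed
qed

lemma Digamma_le_ln_Gamma_defect:
  assumes "x \<ge> 2"
  shows "Digamma x \<le> ln_Gamma_defect x"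
proof -
  have ln_Gamma_2: "ln_Gamma (2::real) = 0"
    using Gamma_fact[of 1] by (simp add: ln_Gamma_real_pos numeral_2_eq_2)
  show ?thesis
  proof (cases "x = 2")
    case True
    then show ?thesis
      using ln_Gamma_2 by (simp add: ln_Gamma_defect_def)
  next
    case False
    have "\<exists>z. 2 < z \<and> z < x \<and> ln_Gamma x - ln_Gamma 2 = (x - 2) * Digamma z"
      using assms False by (intro MVT2 allI impI has_field_derivative_ln_Gamma_real) auto
    then obtain z where z: "2 < z" "z < x" "ln_Gamma x - ln_Gamma 2 = (x - 2) * Digamma z"
      by blast
    have "(x - 2) * Digamma z \<le> (x - 2) * Digamma x"
      using z by (intro mult_left_mono Digamma_real_mono) auto
    moreover have "(x - 1) * Digamma x = (x - 2) * Digamma x + Digamma x"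
      by (simp add: algebra_simps)
    ultimately show ?thesis
      using z ln_Gamma_2 unfolding ln_Gamma_defect_def by linarith
  qed
qed

lemma ln_Gamma_defect_unbounded: "\<exists>x>1. M < ln_Gamma_defect x"
proof -
  define n where "n = nat \<lceil>exp (M + euler_mascheroni)\<rceil> + 1"
  have n: "real n \<ge> 1" "exp (M + euler_mascheroni) < real n + 1"
    using le_of_int_ceiling[of "exp (M + euler_mascheroni)"] unfolding n_def by linarith+
  then have "ln (exp (M + euler_mascheroni)) < ln (real n + 1)"
    by (subst ln_less_cancel_iff) auto
  then have "M + euler_mascheroni < ln (real n + 1)"
    by simp
  also have "\<dots> \<le> harm n"
    by (rule ln_le_harm)
  finally have "M < Digamma (real (Suc n))"
    using Digamma_of_nat[of n, where 'a=real] by simp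
  also have "\<dots> \<le> ln_Gamma_defect (real (Suc n))"
    using n by (intro Digamma_le_ln_Gamma_defect) auto
  finally show ?thesis
    using n by (intro exI[of _ "real (Suc n)"]) auto
qed

lemma weib_phi_eq_ln_Gamma_defect:
  assumes "\<kappa> > 0" "x > 0"
  shows "weib_phi \<kappa> x = ln_Gamma_defect x - ln \<kappa>"
proof -
  have "Gamma x > 0"
    using assms by simp
  then show ?thesis
    using assms by (simp add: weib_phi_def ln_Gamma_defect_def ln_mult_pos ln_Gamma_real_pos)
qed

lemma weib_phi_strict_mono_on:
  assumes "\<kappa> > 0"
  shows "strict_mono_on {1..} (weib_phi \<kappa>)"
proof (rule strict_mono_onI)
  fix x y :: real
  assume "x \<in> {1..}" "y \<in> {1..}" "x < y"
  then show "weib_phi \<kappa> x < weib_phi \<kappa> y"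
    using assms strict_mono_onD[OF ln_Gamma_defect_strict_mono_on]
    by (simp add: weib_phi_eq_ln_Gamma_defect)
qed

lemma weib_phi_ex1_zero:
  assumes "\<kappa> > 1"
  shows "\<exists>!x. x > 1 \<and> weib_phi \<kappa> x = 0"
proof -
  obtain b where "b > 1" "ln \<kappa> < ln_Gamma_defect b"
    using ln_Gamma_defect_unbounded by blast
  moreover have "continuous_on {1..b} ln_Gamma_defect"
    by (intro continuous_at_imp_continuous_on ballI
        DERIV_isCont[OF has_real_derivative_ln_Gamma_defect]) auto
  ultimately obtain x where "1 \<le> x" "x \<le> b" "ln_Gamma_defect x = ln \<kappa>"
    using IVT'[of ln_Gamma_defect 1 "ln \<kappa>" b] assms by auto
  moreover have "x \<noteq> 1"
    using \<open>ln_Gamma_defect x = ln \<kappa>\<close> assms by auto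
  ultimately have x: "x > 1" "weib_phi \<kappa> x = 0"
    using assms by (simp_all add: weib_phi_eq_ln_Gamma_defect)
  show ?thesis
  proof (rule ex1I[of _ x])
    fix y
    assume "y > 1 \<and> weib_phi \<kappa> y = 0"
    then show "y = x"
      using x assms by (rule_tac strict_mono_on_eqD[OF weib_phi_strict_mono_on[of \<kappa>]]) auto
  qed (use x in auto)
qed

definition weib_exponent :: "real \<Rightarrow> real \<Rightarrow> real" where
  "weib_exponent \<kappa> \<alpha> = \<alpha> * (ln \<kappa> + ln_Gamma (1 / \<alpha> + 1))"

lemma weib_g_eq_weib_exponent:
  assumes "\<kappa> > 0" "\<alpha> > 0"
  shows "weib_g \<kappa> \<alpha> = 1 - exp (- exp (weib_exponent \<kappa> \<alpha>))"
proof -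
  have "1 / \<alpha> + 1 > 0"
    using assms by (simp add: add_pos_pos)
  moreover from this have "Gamma (1 / \<alpha> + 1) > 0"
    by (rule Gamma_real_pos)
  moreover from this have "\<kappa> * Gamma (1 / \<alpha> + 1) \<noteq> 0"
    using assms by simp
  ultimately show ?thesis
    using assms by (simp add: weib_g_def weib_exponent_def powr_def ln_mult_pos ln_Gamma_real_pos)
qed

lemma weib_g_le_weib_g:
  assumes "\<kappa> > 0" "\<alpha> > 0" "\<beta> > 0" "weib_exponent \<kappa> \<alpha> \<le> weib_exponent \<kappa> \<beta>"
  shows "weib_g \<kappa> \<alpha> \<le> weib_g \<kappa> \<beta>"
  using assms by (simp add: weib_g_eq_weib_exponent)

lemma has_real_derivative_weib_exponent:
  assumes "\<kappa> > 0" "\<alpha> > 0"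
  shows "(weib_exponent \<kappa> has_real_derivative - weib_phi \<kappa> (1 / \<alpha> + 1)) (at \<alpha>)"
proof -
  have "1 / \<alpha> + 1 > 0"
    using assms by (simp add: add_pos_pos)
  then show ?thesis
    unfolding weib_exponent_def [abs_def] ln_Gamma_defect_def
      weib_phi_eq_ln_Gamma_defect[OF assms(1) \<open>1 / \<alpha> + 1 > 0\<close>]
    using assms by (auto intro!: derivative_eq_intros simp: field_simps power2_eq_square)
qed

lemma weib_g_antimono_on:
  assumes "0 < \<kappa>" "\<kappa> \<le> 1"
  shows "antimono_on {0<..} (weib_g \<kappa>)"
proof (rule monotone_onI)
  fix \<alpha> \<beta> :: real
  assume "\<alpha> \<in> {0<..}" "\<beta> \<in> {0<..}" "\<alpha> \<le> \<beta>"
  have deriv_nonpos: "\<exists>D. (weib_exponent \<kappa> has_real_derivative D) (at t) \<and> D \<le> 0"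
    if "t > 0" for t
  proof (intro exI conjI)
    show "(weib_exponent \<kappa> has_real_derivative - weib_phi \<kappa> (1 / t + 1)) (at t)"
      using that assms by (rule_tac has_real_derivative_weib_exponent) auto
    have "weib_phi \<kappa> 1 < weib_phi \<kappa> (1 / t + 1)"
      using that assms by (intro strict_mono_onD[OF weib_phi_strict_mono_on]) auto
    moreover have "weib_phi \<kappa> 1 = - ln \<kappa>"
      using assms by (simp add: weib_phi_eq_ln_Gamma_defect)
    moreover have "ln \<kappa> \<le> 0"
      using assms by simp
    ultimately show "- weib_phi \<kappa> (1 / t + 1) \<le> 0"
      by linarith
  qed
  have "continuous_on {\<alpha>..\<beta>} (weib_exponent \<kappa>)"
    using \<open>\<alpha> \<in> {0<..}\<close> assms
    by (intro continuous_at_imp_continuous_on ballI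
        DERIV_isCont[OF has_real_derivative_weib_exponent]) auto
  then have "weib_exponent \<kappa> \<beta> \<le> weib_exponent \<kappa> \<alpha>"
  proof (rule DERIV_nonpos_imp_decreasing_open[OF \<open>\<alpha> \<le> \<beta>\<close>, rotated])
    fix t assume "\<alpha> < t"
    then show "\<exists>D. (weib_exponent \<kappa> has_real_derivative D) (at t) \<and> D \<le> 0"
      using \<open>\<alpha> \<in> {0<..}\<close> by (intro deriv_nonpos) auto
  qed
  then show "weib_g \<kappa> \<beta> \<le> weib_g \<kappa> \<alpha>"
    using \<open>\<alpha> \<in> {0<..}\<close> \<open>\<beta> \<in> {0<..}\<close> assms by (intro weib_g_le_weib_g) auto
qed

text \<open>\<open>\<alpha> ln \<Gamma>(1/\<alpha> + 1)\<close> is a difference quotient of \<open>ln \<Gamma>\<close> at 1.\<close>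

lemma tendsto_mult_ln_Gamma_at_top:
  "((\<lambda>\<alpha>::real. \<alpha> * ln_Gamma (1 / \<alpha> + 1)) \<longlongrightarrow> - euler_mascheroni) at_top"
proof -
  have "ln_Gamma (1::real) = 0"
    by (simp add: ln_Gamma_real_pos)
  then have "((\<lambda>h. ln_Gamma (1 + h) / h) \<longlongrightarrow> - euler_mascheroni) (at (0::real))"
    using has_field_derivative_ln_Gamma_real[of 1] unfolding DERIV_def by simp
  then have "((\<lambda>h. ln_Gamma (1 + h) / h) \<longlongrightarrow> - euler_mascheroni) (at_right (0::real))"
    by (rule tendsto_within_subset) auto
  moreover have "filterlim (\<lambda>\<alpha>::real. 1 / \<alpha>) (at_right 0) at_top"
    using filterlim_inverse_at_right_top by (simp add: inverse_eq_divide)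
  ultimately have "((\<lambda>\<alpha>::real. ln_Gamma (1 + 1 / \<alpha>) / (1 / \<alpha>)) \<longlongrightarrow> - euler_mascheroni) at_top"
    by (rule filterlim_compose)
  then show ?thesis
    by (rule Lim_transform_eventually)
      (auto intro!: eventually_at_top_linorderI[of 1] simp: field_simps)
qed

lemma weib_g_tendsto_at_top:
  assumes "0 < \<kappa>" "\<kappa> \<le> 1"
  shows "(weib_g \<kappa> \<longlongrightarrow> (if \<kappa> < 1 then 0 else 1 - exp (- exp (- euler_mascheroni)))) at_top"
proof -
  have "\<forall>\<^sub>F \<alpha> in at_top. 1 - exp (- exp (weib_exponent \<kappa> \<alpha>)) = weib_g \<kappa> \<alpha>"
    using eventually_gt_at_top[of 0] by eventually_elim (simp add: weib_g_eq_weib_exponent assms)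
  moreover have "((\<lambda>\<alpha>. 1 - exp (- exp (weib_exponent \<kappa> \<alpha>))) \<longlongrightarrow>
      (if \<kappa> < 1 then 0 else 1 - exp (- exp (- euler_mascheroni)))) at_top"
  proof (cases "\<kappa> < 1")
    case True
    have "filterlim (\<lambda>\<alpha>. ln \<kappa> * \<alpha>) at_bot at_top"
      using True assms by (intro filterlim_tendsto_neg_mult_at_bot[OF tendsto_const _ filterlim_ident]) auto
    then have "LIM \<alpha> at_top. \<alpha> * ln_Gamma (1 / \<alpha> + 1) + ln \<kappa> * \<alpha> :> at_bot"
      using filterlim_tendsto_add_at_bot_iff[OF tendsto_mult_ln_Gamma_at_top] by blast
    then have "filterlim (weib_exponent \<kappa>) at_bot at_top"
      unfolding weib_exponent_def by (simp add: algebra_simps)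
    then have "((\<lambda>\<alpha>. exp (weib_exponent \<kappa> \<alpha>)) \<longlongrightarrow> 0) at_top"
      by (rule filterlim_compose[OF exp_at_bot])
    then have "((\<lambda>\<alpha>. 1 - exp (- exp (weib_exponent \<kappa> \<alpha>))) \<longlongrightarrow> 1 - exp (- 0)) at_top"
      by (intro tendsto_intros)
    then show ?thesis
      using True by simp
  next
    case False
    then have "\<kappa> = 1"
      using assms by simp
    then show ?thesis
      using tendsto_mult_ln_Gamma_at_top by (auto intro!: tendsto_intros simp: weib_exponent_def)
  qed
  ultimately show ?thesis
    by (rule Lim_transform_eventually[rotated])
qed

lemma weib_g_minimum:
  assumes "\<kappa> > 1" "x\<^sub>0 > 1" "weib_phi \<kappa> x\<^sub>0 = 0" "\<alpha> > 0"
  shows "weib_g \<kappa> (1 / (x\<^sub>0 - 1)) \<le> weib_g \<kappa> \<alpha>"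
proof -
  have mono: "strict_mono_on {1..} (weib_phi \<kappa>)"
    using assms by (intro weib_phi_strict_mono_on) auto
  have "weib_exponent \<kappa> (1 / (x\<^sub>0 - 1)) \<le> weib_exponent \<kappa> \<alpha>"
  proof (rule DERIV_sign_change_imp_minimum[where f = "weib_exponent \<kappa>" and a = 0
        and f' = "\<lambda>t. - weib_phi \<kappa> (1 / t + 1)"])
    fix t :: real
    assume "0 < t" "t \<le> 1 / (x\<^sub>0 - 1)"
    then have "x\<^sub>0 \<le> 1 / t + 1" "1 / t > 0"
      using assms by (simp_all add: field_simps)
    then show "- weib_phi \<kappa> (1 / t + 1) \<le> 0"
      using assms strict_mono_on_leD[OF mono, of x\<^sub>0 "1 / t + 1"] by auto
  next
    fix t :: real
    assume "1 / (x\<^sub>0 - 1) \<le> t"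
    moreover have "1 / (x\<^sub>0 - 1) > 0"
      using assms by simp
    ultimately have "t > 0"
      by linarith
    with \<open>1 / (x\<^sub>0 - 1) \<le> t\<close> have "1 / t + 1 \<le> x\<^sub>0" "1 / t > 0"
      using assms by (simp_all add: field_simps)
    then show "- weib_phi \<kappa> (1 / t + 1) \<ge> 0"
      using assms strict_mono_on_leD[OF mono, of "1 / t + 1" x\<^sub>0] by auto
  qed (use assms in \<open>auto intro: has_real_derivative_weib_exponent\<close>)
  then show ?thesis
    using assms by (intro weib_g_le_weib_g) auto
qed

theorem proposition2p1:
  fixes \<kappa> :: real
  assumes "\<kappa> > 0"
  shows "(\<kappa> \<le> 1 \<longrightarrow>
           (let L = (if \<kappa> < 1 then 0 else 1 - exp (- exp (- euler_mascheroni))) in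
             (INF \<alpha>\<in>{0<..}. weib_g \<kappa> \<alpha>) = L \<and> (weib_g \<kappa> \<longlongrightarrow> L) at_top))
       \<and> (\<kappa> > 1 \<longrightarrow>
           (\<exists>!x. x > 1 \<and> weib_phi \<kappa> x = 0) \<and>
           (\<forall>x0. x0 > 1 \<and> weib_phi \<kappa> x0 = 0 \<longrightarrow>
              (let \<alpha>0 = 1 / (x0 - 1) in
                 (\<forall>\<alpha>>0. weib_g \<kappa> \<alpha>0 \<le> weib_g \<kappa> \<alpha>) \<and>
                 weib_g \<kappa> \<alpha>0 = (INF \<alpha>\<in>{0<..}. weib_g \<kappa> \<alpha>))))"
proof (intro conjI impI allI)
  assume "\<kappa> \<le> 1"
  then show "let L = (if \<kappa> < 1 then 0 else 1 - exp (- exp (- euler_mascheroni))) in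
      (INF \<alpha>\<in>{0<..}. weib_g \<kappa> \<alpha>) = L \<and> (weib_g \<kappa> \<longlongrightarrow> L) at_top"
    using assms weib_g_tendsto_at_top
      antimono_on_tendsto_at_top_imp_INF[OF weib_g_antimono_on weib_g_tendsto_at_top]
    by (simp add: Let_def)
next
  assume "\<kappa> > 1"
  then show "\<exists>!x. x > 1 \<and> weib_phi \<kappa> x = 0"
    by (rule weib_phi_ex1_zero)
next
  fix x\<^sub>0
  assume "\<kappa> > 1" "x\<^sub>0 > 1 \<and> weib_phi \<kappa> x\<^sub>0 = 0"
  then have "\<forall>\<alpha>>0. weib_g \<kappa> (1 / (x\<^sub>0 - 1)) \<le> weib_g \<kappa> \<alpha>"
    using weib_g_minimum by blast
  moreover have "1 / (x\<^sub>0 - 1) > 0"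
    using \<open>x\<^sub>0 > 1 \<and> _\<close> by simp
  ultimately show "let \<alpha>0 = 1 / (x\<^sub>0 - 1) in (\<forall>\<alpha>>0. weib_g \<kappa> \<alpha>0 \<le> weib_g \<kappa> \<alpha>) \<and>
      weib_g \<kappa> \<alpha>0 = (INF \<alpha>\<in>{0<..}. weib_g \<kappa> \<alpha>)"
    by (auto simp: Let_def intro!: cInf_eq_minimum[symmetric])
qed

end
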